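(* For every LCNF formula $\Phi$ and any two labelled clauses $C_1^{L_1}, C_2^{L_2} \in \Phi$ to which self-subsuming resolution applies, $\mathsf{MCS}(\mathsf{ssr}(\Phi, C_1^{L_1}, C_2^{L_2})) = \mathsf{MCS}(\Phi)$.
   Context: Fix a countable set $Lbls$ of labels. A labelled clause $C^L$ is a pair of a clause $C$ (a finite set of literals) and a finite set $L \subseteq Lbls$. An LCNF formula $\Phi$ is a finite set of labelled clauses; $Cls(\Phi) = \{C : C^L \in \Phi\}$ and $Lbls(\Phi) = \bigcup_{C^L\in\Phi} L$. $\Phi$ is satisfiable iff $Cls(\Phi)$ is. For $M \subseteq Lbls(\Phi)$, the induced subformula is $\Phi|_M = \{C^L \in \Phi : L \subseteq M\}$. A set $R \subseteq Lbls(\Phi)$ is an MCS of $\Phi$ if (i) $\Phi|_{Lbls(\Phi)\setminus R}$ is satisfiable and (ii) for every $l \in R$, $\Phi|_{(Lbls(\Phi)\setminus R)\cup\{l\}}$ is unsatisfiable; $\mathsf{MCS}(\Phi)$ is the set of all MCSes of $\Phi$. Self-subsuming resolution: if $C_1^{L_1} = (l \vee A)^{L_1}$ and $C_2^{L_2} = (\neg l \vee B)^{L_2}$ are in $\Phi$ with $A \subset B$ and $L_1 \subseteq L_2$, then $\mathsf{ssr}(\Phi, C_1^{L_1}, C_2^{L_2}) = (\Phi \setminus \{C_2^{L_2}\}) \cup \{B^{L_2}\}$. *)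

theory Defs
  imports Main "HOL-Library.Countable"
begin

datatype 'v lit = Pos 'v | Neg 'v

fun neg :: "'v lit \<Rightarrow> 'v lit" where
  "neg (Pos x) = Neg x"
| "neg (Neg x) = Pos x"

type_synonym 'v clause = "'v lit set"
type_synonym ('v, 'l) lclause = "'v clause \<times> 'l set"
type_synonym ('v, 'l) lcnf = "('v, 'l) lclause set"

fun lit_sat :: "('v \<Rightarrow> bool) \<Rightarrow> 'v lit \<Rightarrow> bool" where
  "lit_sat \<sigma> (Pos x) = \<sigma> x"
| "lit_sat \<sigma> (Neg x) = (\<not> \<sigma> x)"

definition clauses_sat :: "'v clause set \<Rightarrow> bool" where
  "clauses_sat S \<longleftrightarrow> (\<exists>\<sigma>. \<forall>C\<in>S. \<exists>lt\<in>C. lit_sat \<sigma> lt)"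

definition is_lcnf :: "('v, 'l::countable) lcnf \<Rightarrow> bool" where
  "is_lcnf \<Phi> \<longleftrightarrow> finite \<Phi> \<and> (\<forall>(C, L)\<in>\<Phi>. finite C \<and> finite L)"

definition Cls :: "('v, 'l) lcnf \<Rightarrow> 'v clause set" where
  "Cls \<Phi> = fst ` \<Phi>"

definition Lbls :: "('v, 'l) lcnf \<Rightarrow> 'l set" where
  "Lbls \<Phi> = (\<Union>(C, L)\<in>\<Phi>. L)"

definition lsat :: "('v, 'l) lcnf \<Rightarrow> bool" where
  "lsat \<Phi> \<longleftrightarrow> clauses_sat (Cls \<Phi>)"

definition induced :: "('v, 'l) lcnf \<Rightarrow> 'l set \<Rightarrow> ('v, 'l) lcnf" where
  "induced \<Phi> M = {(C, L) \<in> \<Phi>. L \<subseteq> M}"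

definition is_MCS :: "('v, 'l) lcnf \<Rightarrow> 'l set \<Rightarrow> bool" where
  "is_MCS \<Phi> R \<longleftrightarrow> R \<subseteq> Lbls \<Phi>
     \<and> lsat (induced \<Phi> (Lbls \<Phi> - R))
     \<and> (\<forall>l\<in>R. \<not> lsat (induced \<Phi> ((Lbls \<Phi> - R) \<union> {l})))"

definition MCS :: "('v, 'l) lcnf \<Rightarrow> 'l set set" where
  "MCS \<Phi> = {R. is_MCS \<Phi> R}"

definition ssr_applies :: "('v, 'l) lcnf \<Rightarrow> ('v, 'l) lclause \<Rightarrow> ('v, 'l) lclause
    \<Rightarrow> 'v lit \<Rightarrow> 'v clause \<Rightarrow> 'v clause \<Rightarrow> bool" where
  "ssr_applies \<Phi> c1 c2 l A B \<longleftrightarrow> c1 \<in> \<Phi> \<and> c2 \<in> \<Phi>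
     \<and> fst c1 = insert l A \<and> fst c2 = insert (neg l) B
     \<and> A \<subset> B \<and> snd c1 \<subseteq> snd c2"

definition ssr :: "('v, 'l) lcnf \<Rightarrow> ('v, 'l) lclause \<Rightarrow> ('v, 'l) lclause
    \<Rightarrow> 'v clause \<Rightarrow> ('v, 'l) lcnf" where
  "ssr \<Phi> c1 c2 B = (\<Phi> - {c2}) \<union> {(B, snd c2)}"

end

theory Submission
  imports Defs
begin

text \<open>Replacing \<open>\<not>l \<or> B\<close> by \<open>B\<close> is sound because \<open>B\<close> is the resolvent of \<open>l \<or> A\<close> and
  \<open>\<not>l \<or> B\<close> (as \<open>A \<subseteq> B\<close>), and complete because \<open>B\<close> subsumes \<open>\<not>l \<or> B\<close>. Under every
  restriction to a label set \<open>M\<close> both clauses of the step are present or \<open>\<not>l \<or> B\<close> is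
  absent (as \<open>L\<^sub>1 \<subseteq> L\<^sub>2\<close>), so each induced subformula keeps its models; since the
  label set is unchanged too, so are all MCSes.\<close>

definition satisfies :: "('v \<Rightarrow> bool) \<Rightarrow> 'v clause set \<Rightarrow> bool" where
  "satisfies \<sigma> S \<longleftrightarrow> (\<forall>C\<in>S. \<exists>lt\<in>C. lit_sat \<sigma> lt)"

lemma clauses_sat_iff_satisfies: "clauses_sat S \<longleftrightarrow> (\<exists>\<sigma>. satisfies \<sigma> S)"
  by (simp add: clauses_sat_def satisfies_def)

lemma lit_sat_neg [simp]: "lit_sat \<sigma> (neg x) \<longleftrightarrow> \<not> lit_sat \<sigma> x"
  by (cases x) auto

lemma satisfies_resolvent:
  assumes "satisfies \<sigma> {insert l A, insert (neg l) B}" and "A \<subseteq> B"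
  shows "satisfies \<sigma> {B}"
  using assms by (auto simp: satisfies_def)

text \<open>\<open>l \<or> A\<close> may coincide with \<open>\<not>l \<or> B\<close> (e.g. \<open>A = {\<not>l}\<close>, \<open>B = {l, \<not>l}\<close>), so it is
  only assumed to lie in \<open>insert (\<not>l \<or> B) T\<close>.\<close>
lemma satisfies_insert_resolvent_iff:
  assumes "insert l A \<in> insert (insert (neg l) B) T" and "A \<subseteq> B"
  shows "satisfies \<sigma> (insert B T) \<longleftrightarrow> satisfies \<sigma> (insert (insert (neg l) B) T)"
proof
  assume "satisfies \<sigma> (insert B T)"
  then show "satisfies \<sigma> (insert (insert (neg l) B) T)"
    by (auto simp: satisfies_def)
next
  assume sat: "satisfies \<sigma> (insert (insert (neg l) B) T)"
  then have "satisfies \<sigma> {insert l A, insert (neg l) B}"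
    using assms(1) unfolding satisfies_def by blast
  then have "satisfies \<sigma> {B}"
    using assms(2) by (rule satisfies_resolvent)
  with sat show "satisfies \<sigma> (insert B T)"
    by (simp add: satisfies_def)
qed

lemma Lbls_ssr:
  assumes "(C2, L2) \<in> \<Phi>"
  shows "Lbls (ssr \<Phi> c1 (C2, L2) B) = Lbls \<Phi>"
proof -
  have "snd ` ssr \<Phi> c1 (C2, L2) B = snd ` \<Phi>"
    using assms unfolding ssr_def by force
  then show ?thesis
    by (simp add: Lbls_def case_prod_beta')
qed

lemma induced_ssr_unaffected:
  assumes "\<not> L2 \<subseteq> M"
  shows "induced (ssr \<Phi> c1 (C2, L2) B) M = induced \<Phi> M"
  using assms unfolding induced_def ssr_def by auto

lemma Cls_induced_ssr:
  assumes "L2 \<subseteq> M"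
  shows "Cls (induced (ssr \<Phi> c1 (C2, L2) B) M) = insert B (Cls (induced (\<Phi> - {(C2, L2)}) M))"
  using assms unfolding Cls_def induced_def ssr_def by (auto simp: image_iff)

lemma Cls_induced_remove:
  assumes "(C2, L2) \<in> \<Phi>" and "L2 \<subseteq> M"
  shows "Cls (induced \<Phi> M) = insert C2 (Cls (induced (\<Phi> - {(C2, L2)}) M))"
  using assms unfolding Cls_def induced_def by force

lemma lsat_induced_ssr:
  assumes "ssr_applies \<Phi> (C1, L1) (C2, L2) l A B"
  shows "lsat (induced (ssr \<Phi> (C1, L1) (C2, L2) B) M) \<longleftrightarrow> lsat (induced \<Phi> M)"
proof (cases "L2 \<subseteq> M")
  case True
  from assms have c1: "(C1, L1) \<in> \<Phi>" and c2: "(C2, L2) \<in> \<Phi>"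
    and C1: "C1 = insert l A" and C2: "C2 = insert (neg l) B" and "A \<subseteq> B" "L1 \<subseteq> L2"
    by (auto simp: ssr_applies_def)
  define T where "T = Cls (induced (\<Phi> - {(C2, L2)}) M)"
  have "Cls (induced \<Phi> M) = insert C2 T"
    using Cls_induced_remove[OF c2 True] by (simp add: T_def)
  moreover have "C1 \<in> insert C2 T"
    using c1 \<open>L1 \<subseteq> L2\<close> True unfolding calculation[symmetric] Cls_def induced_def by force
  ultimately have "satisfies \<sigma> (insert B T) \<longleftrightarrow> satisfies \<sigma> (Cls (induced \<Phi> M))" for \<sigma>
    using satisfies_insert_resolvent_iff \<open>A \<subseteq> B\<close> unfolding C1 C2 by simp
  then show ?thesis
    unfolding lsat_def clauses_sat_iff_satisfies Cls_induced_ssr[OF True] T_def by simp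
qed (simp add: induced_ssr_unaffected)

theorem proposition4:
  fixes \<Phi> :: "('v, 'l::countable) lcnf"
  assumes "is_lcnf \<Phi>"
    and "ssr_applies \<Phi> (C1, L1) (C2, L2) l A B"
  shows "MCS (ssr \<Phi> (C1, L1) (C2, L2) B) = MCS \<Phi>"
proof -
  have "Lbls (ssr \<Phi> (C1, L1) (C2, L2) B) = Lbls \<Phi>"
    using assms(2) by (intro Lbls_ssr) (auto simp: ssr_applies_def)
  then show ?thesis
    unfolding MCS_def is_MCS_def lsat_induced_ssr[OF assms(2)] by simp
qed

end
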